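(* Assume separability (as defined in the context). Consider a stable outcome, with equilibrium utilities $(\tilde u_i)$ of men and $(\tilde v_j)$ of women and group-level matching patterns $(\mu_{xy})$. Then there exist numbers $U_{xy}$ and $V_{xy}$ for $(x,y)\in\mathcal A$, with $U_{x0}=0$ and $V_{0y}=0$, such that: (i) a man $i$ of group $x$ is married to a woman of group $y^*\in\mathcal Y$ if and only if $y^*$ maximizes $U_{xy}+\varepsilon_{iy}$ over $y\in\mathcal Y_0$; if the maximum is achieved at $y=0$ he is single; and $\tilde u_i=\max_{y\in\mathcal Y_0}(U_{xy}+\varepsilon_{iy})$; (ii) a woman $j$ of group $y$ is married to a man of group $x^*\in\mathcal X$ if and only if $x^*$ maximizes $V_{xy}+\eta_{xj}$ over $x\in\mathcal X_0$; if the maximum is achieved at $x=0$ she is single; and $\tilde v_j=\max_{x\in\mathcal X_0}(V_{xy}+\eta_{xj})$; (iii) $U_{xy}+V_{xy}\ge\Phi_{xy}$ for all $x\in\mathcal X,y\in\mathcal Y$, with equality whenever $\mu_{xy}>0$.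
   Context: Setting. $\mathcal X$ and $\mathcal Y$ are finite nonempty sets (groups of men and of women); $\mathcal X_0=\mathcal X\cup\{0\}$, $\mathcal Y_0=\mathcal Y\cup\{0\}$, where $0$ stands for singlehood, and $\mathcal A=(\mathcal X\times\mathcal Y)\cup(\mathcal X\times\{0\})\cup(\{0\}\times\mathcal Y)$. There is a continuum of men and of women: $n_x>0$ is the mass of men of group $x$, $m_y>0$ the mass of women of group $y$, and $\bm r=(\bm n,\bm m)$. Each man $i$ has a group $x_i\in\mathcal X$ and a vector $\varepsilon_i=(\varepsilon_{iy})_{y\in\mathcal Y_0}\in\mathbb R^{\mathcal Y_0}$ whose distribution among men of group $x$ is $P_x$; each woman $j$ has a group $y_j\in\mathcal Y$ and a vector $\eta_j=(\eta_{xj})_{x\in\mathcal X_0}\in\mathbb R^{\mathcal X_0}$ whose distribution among women of group $y$ is $Q_y$. Utility is perfectly transferable. Separability: there is a matrix $\Phi=(\Phi_{xy})_{x\in\mathcal X,y\in\mathcal Y}$ such that the joint surplus of a match between man $i$ and woman $j$ is $\tilde\Phi_{ij}=\Phi_{x_iy_j}+\varepsilon_{iy_j}+\eta_{x_ij}$, the utility of a single man $i$ is $\varepsilon_{i0}$ and that of a single woman $j$ is $\eta_{0j}$; moreover $\max_{y\in\mathcal Y_0}|\varepsilon_y|$ has finite expectation under each $P_x$ and $\max_{x\in\mathcal X_0}|\eta_x|$ has finite expectation under each $Q_y$. A stable outcome is an assignment in which each individual has at most one partner, together with utilities $\tilde u_i,\tilde v_j$ such that $\tilde u_i\ge\varepsilon_{i0}$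 with equality if $i$ is single, $\tilde v_j\ge\eta_{0j}$ with equality if $j$ is single, and $\tilde u_i+\tilde v_j\ge\tilde\Phi_{ij}$ for all $i,j$, with equality if $i$ and $j$ are matched together. At the group level a matching is described by $\mu=(\mu_{xy})_{x\in\mathcal X,y\in\mathcal Y}$, where $\mu_{xy}$ is the mass of couples formed by a man of group $x$ and a woman of group $y$; $\mu_{x0}=n_x-\sum_{y}\mu_{xy}$ and $\mu_{0y}=m_y-\sum_x\mu_{xy}$ are the masses of singles. The set of feasible matchings is $\mathcal M(\bm r)=\{\mu\ge0:\sum_{y}\mu_{xy}\le n_x\ \forall x,\ \sum_x\mu_{xy}\le m_y\ \forall y\}$. *)

theory Defs
  imports "HOL-Analysis.Analysis"
begin

(* Groups of men: type 'x; groups of women: type 'y.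
   Singlehood 0 is encoded by None: X_0 = opt0 X, Y_0 = opt0 Y.
   Men are the points of measure space M, women the points of W.
   eps i (Some y) = eps_iy, eps i None = eps_i0; eta j (Some x) = eta_xj,
   eta j None = eta_0j.  match i j: man i and woman j are married. *)

definition opt0 :: "'a set \<Rightarrow> 'a option set" where
  "opt0 S = insert None (Some ` S)"

definition surplus ::
  "('m \<Rightarrow> 'x) \<Rightarrow> ('w \<Rightarrow> 'y) \<Rightarrow> ('x \<Rightarrow> 'y \<Rightarrow> real) \<Rightarrow>
   ('m \<Rightarrow> 'y option \<Rightarrow> real) \<Rightarrow> ('w \<Rightarrow> 'x option \<Rightarrow> real) \<Rightarrow> 'm \<Rightarrow> 'w \<Rightarrow> real" where
  "surplus xg yg Phi eps eta i j =
     Phi (xg i) (yg j) + eps i (Some (yg j)) + eta j (Some (xg i))"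

definition assignment :: "'m set \<Rightarrow> 'w set \<Rightarrow> ('m \<Rightarrow> 'w \<Rightarrow> bool) \<Rightarrow> bool" where
  "assignment SM SW match \<longleftrightarrow>
     (\<forall>i j. match i j \<longrightarrow> i \<in> SM \<and> j \<in> SW) \<and>
     (\<forall>i j j'. match i j \<and> match i j' \<longrightarrow> j = j') \<and>
     (\<forall>i i' j. match i j \<and> match i' j \<longrightarrow> i = i')"

definition stable_outcome ::
  "'m set \<Rightarrow> 'w set \<Rightarrow> ('m \<Rightarrow> 'x) \<Rightarrow> ('w \<Rightarrow> 'y) \<Rightarrow> ('x \<Rightarrow> 'y \<Rightarrow> real) \<Rightarrow>
   ('m \<Rightarrow> 'y option \<Rightarrow> real) \<Rightarrow> ('w \<Rightarrow> 'x option \<Rightarrow> real) \<Rightarrow>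
   ('m \<Rightarrow> 'w \<Rightarrow> bool) \<Rightarrow> ('m \<Rightarrow> real) \<Rightarrow> ('w \<Rightarrow> real) \<Rightarrow> bool" where
  "stable_outcome SM SW xg yg Phi eps eta match u v \<longleftrightarrow>
     assignment SM SW match \<and>
     (\<forall>i\<in>SM. u i \<ge> eps i None \<and> ((\<not> (\<exists>j. match i j)) \<longrightarrow> u i = eps i None)) \<and>
     (\<forall>j\<in>SW. v j \<ge> eta j None \<and> ((\<not> (\<exists>i. match i j)) \<longrightarrow> v j = eta j None)) \<and>
     (\<forall>i\<in>SM. \<forall>j\<in>SW. u i + v j \<ge> surplus xg yg Phi eps eta i j \<and>
        (match i j \<longrightarrow> u i + v j = surplus xg yg Phi eps eta i j))"

definition mu_pattern ::
  "'m measure \<Rightarrow> 'w set \<Rightarrow> ('m \<Rightarrow> 'x) \<Rightarrow> ('w \<Rightarrow> 'y) \<Rightarrow> ('m \<Rightarrow> 'w \<Rightarrow> bool) \<Rightarrow> 'x \<Rightarrow> 'y \<Rightarrow> real" where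
  "mu_pattern M SW xg yg match x y =
     measure M {i \<in> space M. xg i = x \<and> (\<exists>j\<in>SW. match i j \<and> yg j = y)}"

end

theory Submission
  imports Defs
begin

text \<open>Take \<open>U\<^sub>x\<^sub>y\<close> to be the infimum of \<open>u\<^sub>i - \<epsilon>\<^sub>i\<^sub>y\<close> over men of group \<open>x\<close>, and \<open>V\<^sub>x\<^sub>y\<close> the
  infimum of \<open>v\<^sub>j - \<eta>\<^sub>x\<^sub>j\<close> over women of group \<open>y\<close>. Because the idiosyncratic terms of the
  surplus are separable, the no-blocking inequalities \<open>u\<^sub>i + v\<^sub>j \<ge> \<Phi>\<^sub>x\<^sub>y + \<epsilon>\<^sub>i\<^sub>y + \<eta>\<^sub>x\<^sub>j\<close> pass
  to the infima, giving \<open>U\<^sub>x\<^sub>y + V\<^sub>x\<^sub>y \<ge> \<Phi>\<^sub>x\<^sub>y\<close>; for a married couple they hold with equality,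
  which forces both infima to be attained at that couple. Hence each man obtains exactly
  \<open>max\<^sub>y (U\<^sub>x\<^sub>y + \<epsilon>\<^sub>i\<^sub>y)\<close>, attained at his partner's group (or at singlehood), and symmetrically
  for women.\<close>

definition extend_by_zero :: "('a \<Rightarrow> 'b \<Rightarrow> real) \<Rightarrow> 'a option \<Rightarrow> 'b option \<Rightarrow> real" where
  "extend_by_zero f a b = (case (a, b) of (Some x, Some y) \<Rightarrow> f x y | _ \<Rightarrow> 0)"

lemma extend_by_zero_simps [simp]:
  "extend_by_zero f (Some x) (Some y) = f x y"
  "extend_by_zero f None b = 0"
  "extend_by_zero f a None = 0"
  by (auto simp: extend_by_zero_def split: option.split)

definition systematic_utility ::
  "'m set \<Rightarrow> ('m \<Rightarrow> 'x) \<Rightarrow> ('m \<Rightarrow> real) \<Rightarrow> ('m \<Rightarrow> 'y option \<Rightarrow> real) \<Rightarrow> 'x \<Rightarrow> 'y \<Rightarrow> real"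
  where "systematic_utility SM xg u eps x y = (INF i\<in>{i \<in> SM. xg i = x}. u i - eps i (Some y))"

lemma stable_outcome_swap:
  assumes "stable_outcome SM SW xg yg Phi eps eta match u v"
  shows "stable_outcome SW SM yg xg (\<lambda>y x. Phi x y) eta eps (\<lambda>j i. match i j) v u"
proof -
  have "assignment SW SM (\<lambda>j i. match i j)"
    using assms unfolding stable_outcome_def assignment_def by blast
  then show ?thesis
    using assms unfolding stable_outcome_def surplus_def by (simp add: ac_simps)
qed

lemma cINF_add_cINF_ge:
  fixes f :: "'a \<Rightarrow> real" and g :: "'b \<Rightarrow> real"
  assumes "A \<noteq> {}" "B \<noteq> {}" and "\<And>a b. a \<in> A \<Longrightarrow> b \<in> B \<Longrightarrow> c \<le> f a + g b"
  shows "c \<le> (INF a\<in>A. f a) + (INF b\<in>B. g b)"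
proof -
  have "c - f a \<le> (INF b\<in>B. g b)" if "a \<in> A" for a
    using assms that by (intro cINF_greatest) (auto simp: algebra_simps)
  then have "c - (INF b\<in>B. g b) \<le> (INF a\<in>A. f a)"
    using assms(1) by (intro cINF_greatest) (auto simp: algebra_simps)
  then show ?thesis by simp
qed

lemma systematic_utility_le:
  assumes stable: "stable_outcome SM SW xg yg Phi eps eta match u v"
    and i: "i \<in> SM" and j: "j \<in> SW"
  shows "systematic_utility SM xg u eps (xg i) (yg j) \<le> u i - eps i (Some (yg j))"
  unfolding systematic_utility_def
proof (rule cINF_lower)
  have "Phi (xg i) (yg j) - (v j - eta j (Some (xg i))) \<le> u i' - eps i' (Some (yg j))"
    if "i' \<in> SM" "xg i' = xg i" for i'
    using stable that j unfolding stable_outcome_def surplus_def by force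
  then show "bdd_below ((\<lambda>i. u i - eps i (Some (yg j))) ` {i' \<in> SM. xg i' = xg i})"
    by (intro bdd_belowI) blast
qed (use i in auto)

lemma systematic_utilities_no_blocking:
  assumes stable: "stable_outcome SM SW xg yg Phi eps eta match u v"
    and "\<exists>i\<in>SM. xg i = x" "\<exists>j\<in>SW. yg j = y"
  shows "Phi x y \<le> systematic_utility SM xg u eps x y + systematic_utility SW yg v eta y x"
  unfolding systematic_utility_def
proof (rule cINF_add_cINF_ge)
  show "Phi x y \<le> (u i - eps i (Some y)) + (v j - eta j (Some x))"
    if "i \<in> {i \<in> SM. xg i = x}" "j \<in> {j \<in> SW. yg j = y}" for i j
    using stable that unfolding stable_outcome_def surplus_def by force
qed (use assms in auto)

lemma systematic_utilities_matched:
  assumes stable: "stable_outcome SM SW xg yg Phi eps eta match u v"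
    and m: "match i j"
  shows "systematic_utility SM xg u eps (xg i) (yg j) = u i - eps i (Some (yg j))"
    and "systematic_utility SW yg v eta (yg j) (xg i) = v j - eta j (Some (xg i))"
    and "systematic_utility SM xg u eps (xg i) (yg j) + systematic_utility SW yg v eta (yg j) (xg i)
           = Phi (xg i) (yg j)"
proof -
  have ij: "i \<in> SM" "j \<in> SW"
    using stable m unfolding stable_outcome_def assignment_def by blast+
  have "u i + v j = surplus xg yg Phi eps eta i j"
    using stable m ij unfolding stable_outcome_def by blast
  moreover note systematic_utility_le[OF stable ij]
    systematic_utility_le[OF stable_outcome_swap[OF stable] ij(2,1)]
    systematic_utilities_no_blocking[OF stable, of "xg i" "yg j"]
  ultimately show "systematic_utility SM xg u eps (xg i) (yg j) = u i - eps i (Some (yg j))"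
    and "systematic_utility SW yg v eta (yg j) (xg i) = v j - eta j (Some (xg i))"
    and "systematic_utility SM xg u eps (xg i) (yg j) + systematic_utility SW yg v eta (yg j) (xg i)
           = Phi (xg i) (yg j)"
    using ij unfolding surplus_def by force+
qed

lemma stable_outcome_men_choice:
  assumes stable: "stable_outcome SM SW xg yg Phi eps eta match u v"
    and i: "i \<in> SM" and Y_fin: "finite Y"
    and yg_in: "\<forall>j\<in>SW. yg j \<in> Y" and women: "\<forall>y\<in>Y. \<exists>j\<in>SW. yg j = y"
  defines "U \<equiv> extend_by_zero (systematic_utility SM xg u eps)"
  shows "(\<forall>j. match i j \<longrightarrow>
           (\<forall>y'\<in>opt0 Y. U (Some (xg i)) y' + eps i y'
                 \<le> U (Some (xg i)) (Some (yg j)) + eps i (Some (yg j)))) \<and>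
        ((\<not> (\<exists>j. match i j)) \<longrightarrow>
           (\<forall>y'\<in>opt0 Y. U (Some (xg i)) y' + eps i y' \<le> U (Some (xg i)) None + eps i None)) \<and>
        u i = Max ((\<lambda>y'. U (Some (xg i)) y' + eps i y') ` opt0 Y)"
proof -
  define h where "h y' = U (Some (xg i)) y' + eps i y'" for y'
  have single: "eps i None \<le> u i" "\<not> (\<exists>j. match i j) \<Longrightarrow> u i = eps i None"
    using stable i unfolding stable_outcome_def by blast+
  have h_le: "h y' \<le> u i" if y': "y' \<in> opt0 Y" for y'
  proof (cases y')
    case (Some y)
    then obtain j where "j \<in> SW" "yg j = y"
      using y' women unfolding opt0_def by auto
    then show ?thesis
      using systematic_utility_le[OF stable i] Some by (force simp: h_def U_def)
  qed (use single in \<open>simp add: h_def U_def\<close>)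
  obtain y0 where y0: "y0 \<in> opt0 Y" "h y0 = u i"
    and y0_partner: "\<And>j. match i j \<Longrightarrow> y0 = Some (yg j)"
    and y0_single: "\<not> (\<exists>j. match i j) \<Longrightarrow> y0 = None"
  proof (cases "\<exists>j. match i j")
    case True
    then obtain j where m: "match i j" by blast
    have "\<And>j'. match i j' \<Longrightarrow> j' = j" "j \<in> SW"
      using stable m unfolding stable_outcome_def assignment_def by blast+
    then show ?thesis
      using that[of "Some (yg j)"] systematic_utilities_matched(1)[OF stable m] True yg_in
      by (force simp: h_def U_def opt0_def)
  next
    case False
    then show ?thesis
      using that[of None] single by (simp add: h_def U_def opt0_def)
  qed
  have "finite (opt0 Y)"
    using Y_fin unfolding opt0_def by simp
  then have "Max (h ` opt0 Y) = u i"
    using h_le y0 by (intro Max_eqI) (auto intro: image_eqI[of _ _ y0])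
  then show ?thesis
    using h_le y0 y0_partner y0_single unfolding h_def by auto
qed

lemma mu_pattern_pos_imp_matched:
  assumes "mu_pattern M SW xg yg match x y > 0"
  obtains i j where "i \<in> space M" "j \<in> SW" "match i j" "xg i = x" "yg j = y"
proof -
  have "{i \<in> space M. xg i = x \<and> (\<exists>j\<in>SW. match i j \<and> yg j = y)} \<noteq> {}"
    using assms unfolding mu_pattern_def by (metis measure_empty less_irrefl)
  then show ?thesis using that by blast
qed

theorem proposition1:
  fixes X :: "'x set" and Y :: "'y set"
    and M :: "'m measure" and W :: "'w measure"
    and xg :: "'m \<Rightarrow> 'x" and yg :: "'w \<Rightarrow> 'y"
    and Phi :: "'x \<Rightarrow> 'y \<Rightarrow> real"
    and eps :: "'m \<Rightarrow> 'y option \<Rightarrow> real" and eta :: "'w \<Rightarrow> 'x option \<Rightarrow> real"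
    and match :: "'m \<Rightarrow> 'w \<Rightarrow> bool"
    and u :: "'m \<Rightarrow> real" and v :: "'w \<Rightarrow> real"
  assumes X_fin: "finite X" and X_ne: "X \<noteq> {}"
    and Y_fin: "finite Y" and Y_ne: "Y \<noteq> {}"
    and M_fin: "finite_measure M" and W_fin: "finite_measure W"
    and xg_in: "\<forall>i\<in>space M. xg i \<in> X"
    and yg_in: "\<forall>j\<in>space W. yg j \<in> Y"
    and n_pos: "\<forall>x\<in>X. measure M {i \<in> space M. xg i = x} > 0"
    and m_pos: "\<forall>y\<in>Y. measure W {j \<in> space W. yg j = y} > 0"
    and eps_int: "\<forall>x\<in>X. set_integrable M {i \<in> space M. xg i = x}
                     (\<lambda>i. Max ((\<lambda>y. \<bar>eps i y\<bar>) ` opt0 Y))"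
    and eta_int: "\<forall>y\<in>Y. set_integrable W {j \<in> space W. yg j = y}
                     (\<lambda>j. Max ((\<lambda>x. \<bar>eta j x\<bar>) ` opt0 X))"
    and stable: "stable_outcome (space M) (space W) xg yg Phi eps eta match u v"
  shows "\<exists>U V :: 'x option \<Rightarrow> 'y option \<Rightarrow> real.
     (\<forall>x\<in>X. U (Some x) None = 0) \<and> (\<forall>y\<in>Y. V None (Some y) = 0) \<and>
     (\<forall>i\<in>space M.
        (\<forall>j. match i j \<longrightarrow>
           (\<forall>y'\<in>opt0 Y. U (Some (xg i)) y' + eps i y'
                 \<le> U (Some (xg i)) (Some (yg j)) + eps i (Some (yg j)))) \<and>
        ((\<not> (\<exists>j. match i j)) \<longrightarrow>
           (\<forall>y'\<in>opt0 Y. U (Some (xg i)) y' + eps i y' \<le> U (Some (xg i)) None + eps i None)) \<and>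
        u i = Max ((\<lambda>y'. U (Some (xg i)) y' + eps i y') ` opt0 Y)) \<and>
     (\<forall>j\<in>space W.
        (\<forall>i. match i j \<longrightarrow>
           (\<forall>x'\<in>opt0 X. V x' (Some (yg j)) + eta j x'
                 \<le> V (Some (xg i)) (Some (yg j)) + eta j (Some (xg i)))) \<and>
        ((\<not> (\<exists>i. match i j)) \<longrightarrow>
           (\<forall>x'\<in>opt0 X. V x' (Some (yg j)) + eta j x' \<le> V None (Some (yg j)) + eta j None)) \<and>
        v j = Max ((\<lambda>x'. V x' (Some (yg j)) + eta j x') ` opt0 X)) \<and>
     (\<forall>x\<in>X. \<forall>y\<in>Y. U (Some x) (Some y) + V (Some x) (Some y) \<ge> Phi x y \<and>
        (mu_pattern M (space W) xg yg match x y > 0 \<longrightarrow>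
           U (Some x) (Some y) + V (Some x) (Some y) = Phi x y))"
proof -
  define U0 where "U0 = systematic_utility (space M) xg u eps"
  define V0 where "V0 = systematic_utility (space W) yg v eta"
  have men: "\<forall>x\<in>X. \<exists>i\<in>space M. xg i = x" and women: "\<forall>y\<in>Y. \<exists>j\<in>space W. yg j = y"
    using n_pos m_pos by (metis (mono_tags, lifting) Collect_empty_eq measure_empty less_irrefl)+
  have pairs: "Phi x y \<le> U0 x y + V0 y x \<and>
      (mu_pattern M (space W) xg yg match x y > 0 \<longrightarrow> U0 x y + V0 y x = Phi x y)"
    if x: "x \<in> X" and y: "y \<in> Y" for x y
  proof (intro conjI impI)
    show "Phi x y \<le> U0 x y + V0 y x"
      using systematic_utilities_no_blocking[OF stable] men women x y
      unfolding U0_def V0_def by blast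
    assume "mu_pattern M (space W) xg yg match x y > 0"
    then obtain i j where "match i j" "xg i = x" "yg j = y"
      by (rule mu_pattern_pos_imp_matched)
    then show "U0 x y + V0 y x = Phi x y"
      using systematic_utilities_matched(3)[OF stable] unfolding U0_def V0_def by blast
  qed
  show ?thesis
    using stable_outcome_men_choice[OF stable _ Y_fin yg_in women]
      stable_outcome_men_choice[OF stable_outcome_swap[OF stable] _ X_fin xg_in men] pairs
    by (intro exI[of _ "extend_by_zero U0"] exI[of _ "\<lambda>x y. extend_by_zero V0 y x"])
      (simp add: U0_def V0_def)
qed

end
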